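(* Let $n\ge 1$, let $\mathcal P$ and $\mathcal Q$ be weak orthogonal quantum Latin squares of order $n$ with vector entries $\ket{P_{ij}}$ and $\ket{Q_{ij}}$, and let $(H_k)_{k=0}^{n-1}$ and $(G_j)_{j=0}^{n-1}$ be two indexed families of $n\times n$ Hadamard matrices. Then the bases $B(\mathcal Q,(H_k))$ and $B(\mathcal P,(G_j))$ of $\mathbb C^n\otimes\mathbb C^n$ are mutually unbiased, i.e. for every state $\ket a$ of $B(\mathcal Q,(H_k))$ and every state $\ket b$ of $B(\mathcal P,(G_j))$ we have $|\langle a|b\rangle|^2=\frac{1}{n^2}$.
   Context: Let $\{\ket k : k=0,\dots,n-1\}$ be the computational basis of $\mathbb C^n$. A quantum Latin square (QLS) of order $n$ is an $n\times n$ array of vectors of $\mathbb C^n$ such that every row and every column is an orthonormal basis of $\mathbb C^n$; the vector in the $i$-th column and $j$-th row of a QLS $\mathcal Q$ is written $\ket{Q_{ij}}$ (indices $0,\dots,n-1$). Two QLSs $\mathcal P,\mathcal Q$ of order $n$ are weak orthogonal if for all $i,j\in\{0,\dots,n-1\}$ there is a unique $t\in\{0,\dots,n-1\}$ with $\sum_{k=0}^{n-1}\ket k\,\langle Q_{ki}|P_{kj}\rangle=\ket t$ (equivalently: for the $i$-th row of $\mathcal Q$ and $j$-th row of $\mathcal P$, the $n$ componentwise inner products are $n-1$ zeros and a single $1$). A Hadamard matrix of order $n$ is an $n\times n$ complex matrix $H$ with $|H_{ij}|=1$ for all $i,j$ and $HH^\dagger=H^\dagger H=n\,I_n$. Given a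 QLS $\mathcal Q$ and a family $(H_j)_{j=0}^{n-1}$ of Hadamards of order $n$, the quantum Latin square maximally entangled basis $B(\mathcal Q,(H_j))$ is the family of vectors $A_{ij}=\frac{1}{\sqrt n}\sum_{k=0}^{n-1}\ket k\otimes \ket{Q_{kj}}\bra k H_j\ket i$, $i,j\in\{0,\dots,n-1\}$, in $\mathbb C^n\otimes\mathbb C^n$ (this is an orthonormal basis of maximally entangled states). *)

theory Defs
  imports Complex_Main
begin

text \<open>Vectors of C^n are represented as functions nat => complex, only the
coordinates 0..n-1 being relevant; vectors of C^n (x) C^n as functions
nat => nat => complex (coefficient of |a> (x) |b>), n x n matrices as
nat => nat => complex (entry (row, column)).\<close>

type_synonym cvec = "nat \<Rightarrow> complex"
type_synonym cvec2 = "nat \<Rightarrow> nat \<Rightarrow> complex"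
type_synonym cmat = "nat \<Rightarrow> nat \<Rightarrow> complex"

definition cinner :: "nat \<Rightarrow> cvec \<Rightarrow> cvec \<Rightarrow> complex" where
  "cinner n u v = (\<Sum>k<n. cnj (u k) * v k)"

definition cinner2 :: "nat \<Rightarrow> cvec2 \<Rightarrow> cvec2 \<Rightarrow> complex" where
  "cinner2 n x y = (\<Sum>a<n. \<Sum>b<n. cnj (x a b) * y a b)"

definition ket :: "nat \<Rightarrow> cvec" where
  "ket t = (\<lambda>k. if k = t then 1 else 0)"

definition tensor :: "cvec \<Rightarrow> cvec \<Rightarrow> cvec2" where
  "tensor u v = (\<lambda>a b. u a * v b)"

definition orthonormal_basis :: "nat \<Rightarrow> (nat \<Rightarrow> cvec) \<Rightarrow> bool" where
  "orthonormal_basis n f \<longleftrightarrow>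
     (\<forall>i<n. \<forall>i'<n. cinner n (f i) (f i') = (if i = i' then 1 else 0)) \<and>
     (\<forall>v::cvec. \<exists>c::nat \<Rightarrow> complex. \<forall>k<n. v k = (\<Sum>i<n. c i * f i k))"

text \<open>Q i j is the vector in the i-th column and j-th row.\<close>
definition is_QLS :: "nat \<Rightarrow> (nat \<Rightarrow> nat \<Rightarrow> cvec) \<Rightarrow> bool" where
  "is_QLS n Q \<longleftrightarrow>
     (\<forall>j<n. orthonormal_basis n (\<lambda>i. Q i j)) \<and>
     (\<forall>i<n. orthonormal_basis n (\<lambda>j. Q i j))"

definition weak_orthogonal :: "nat \<Rightarrow> (nat \<Rightarrow> nat \<Rightarrow> cvec) \<Rightarrow> (nat \<Rightarrow> nat \<Rightarrow> cvec) \<Rightarrow> bool" where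
  "weak_orthogonal n P Q \<longleftrightarrow> is_QLS n P \<and> is_QLS n Q \<and>
     (\<forall>i<n. \<forall>j<n. \<exists>!t. t < n \<and>
        (\<forall>m<n. (\<Sum>k<n. ket k m * cinner n (Q k i) (P k j)) = ket t m))"

definition hadamard :: "nat \<Rightarrow> cmat \<Rightarrow> bool" where
  "hadamard n H \<longleftrightarrow>
     (\<forall>i<n. \<forall>j<n. cmod (H i j) = 1) \<and>
     (\<forall>i<n. \<forall>j<n. (\<Sum>k<n. H i k * cnj (H j k)) = (if i = j then of_nat n else 0)) \<and>
     (\<forall>i<n. \<forall>j<n. (\<Sum>k<n. cnj (H k i) * H k j) = (if i = j then of_nat n else 0))"

definition qls_meb :: "nat \<Rightarrow> (nat \<Rightarrow> nat \<Rightarrow> cvec) \<Rightarrow> (nat \<Rightarrow> cmat) \<Rightarrow> nat \<Rightarrow> nat \<Rightarrow> cvec2" where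
  "qls_meb n Q H i j = (\<lambda>a b. complex_of_real (1 / sqrt (real n)) *
      (\<Sum>k<n. tensor (ket k) (Q k j) a b * H j k i))"

end

theory Submission
  imports Defs
begin

text \<open>The k-th block of A_ij is |k> (x) H_j(k,i) |Q_kj> / sqrt n, so the inner product of
  A_ij and the basis vector B_i'j' built from P and G is
  1/n * sum_k cnj (H_j(k,i)) G_j'(k,i') <Q_kj|P_kj'>. Weak orthogonality says that the vector of
  inner products <Q_kj|P_kj'> (indexed by k) is a standard basis vector |t>, so only the term
  k = t survives, and it is 1/n times a product of two unimodular Hadamard entries.\<close>

lemma sum_ket_weighted:
  assumes "m < n"
  shows "(\<Sum>k<n. ket k m * f k) = f m"
proof -
  have "(\<Sum>k<n. ket k m * f k) = (\<Sum>k<n. if k = m then f m else 0)"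
    by (rule sum.cong) (auto simp: ket_def)
  also have "\<dots> = f m"
    using assms by simp
  finally show ?thesis .
qed

lemma qls_meb_apply:
  assumes "a < n"
  shows "qls_meb n Q H i j a b = complex_of_real (1 / sqrt (real n)) * (Q a j b * H j a i)"
proof -
  have "(\<Sum>k<n. tensor (ket k) (Q k j) a b * H j k i) = (\<Sum>k<n. ket k a * (Q k j b * H j k i))"
    by (simp add: tensor_def mult.assoc)
  then show ?thesis
    using sum_ket_weighted[OF assms] by (simp add: qls_meb_def)
qed

lemma cinner2_qls_meb:
  "cinner2 n (qls_meb n Q H i j) (qls_meb n P G i' j') =
    (\<Sum>a<n. complex_of_real (1 / real n) * (cnj (H j a i) * G j' a i' * cinner n (Q a j) (P a j')))"
  unfolding cinner2_def
proof (rule sum.cong[OF refl])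
  fix a assume "a \<in> {..<n}"
  then have a: "a < n" by simp
  have scale: "cnj (complex_of_real (1 / sqrt (real n))) * complex_of_real (1 / sqrt (real n))
      = complex_of_real (1 / real n)"
    by (simp flip: of_real_mult add: real_sqrt_mult_self)
  show "(\<Sum>b<n. cnj (qls_meb n Q H i j a b) * qls_meb n P G i' j' a b)
      = complex_of_real (1 / real n) * (cnj (H j a i) * G j' a i' * cinner n (Q a j) (P a j'))"
    unfolding qls_meb_apply[OF a] cinner_def sum_distrib_left scale [symmetric]
    by (rule sum.cong[OF refl]) (simp add: mult_ac)
qed

lemma weak_orthogonal_cinner_ket:
  assumes "weak_orthogonal n P Q" and "i < n" and "j < n"
  obtains t where "t < n" and "\<And>m. m < n \<Longrightarrow> cinner n (Q m i) (P m j) = ket t m"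
proof -
  obtain t where "t < n" and "\<forall>m<n. (\<Sum>k<n. ket k m * cinner n (Q k i) (P k j)) = ket t m"
    using assms unfolding weak_orthogonal_def by blast
  with that show ?thesis by (simp add: sum_ket_weighted)
qed

lemma hadamard_norm_entry:
  "hadamard n H \<Longrightarrow> i < n \<Longrightarrow> j < n \<Longrightarrow> cmod (H i j) = 1"
  by (simp add: hadamard_def)

theorem theorem13:
  fixes n :: nat and P Q :: "nat \<Rightarrow> nat \<Rightarrow> cvec" and H G :: "nat \<Rightarrow> cmat"
  assumes "n \<ge> 1"
    and "is_QLS n P" and "is_QLS n Q"
    and "weak_orthogonal n P Q"
    and "\<forall>k<n. hadamard n (H k)"
    and "\<forall>j<n. hadamard n (G j)"
  shows "\<forall>i<n. \<forall>j<n. \<forall>i'<n. \<forall>j'<n.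
           (cmod (cinner2 n (qls_meb n Q H i j) (qls_meb n P G i' j')))\<^sup>2 = 1 / (real n)\<^sup>2"
proof (intro allI impI)
  fix i j i' j' assume ij: "i < n" "j < n" "i' < n" "j' < n"
  obtain t where t: "t < n" and inner_ket: "\<And>m. m < n \<Longrightarrow> cinner n (Q m j) (P m j') = ket t m"
    using weak_orthogonal_cinner_ket[OF assms(4) ij(2,4)] by blast
  have "cinner2 n (qls_meb n Q H i j) (qls_meb n P G i' j')
      = (\<Sum>a<n. ket a t * (complex_of_real (1 / real n) * (cnj (H j a i) * G j' a i')))"
    unfolding cinner2_qls_meb by (rule sum.cong) (auto simp: inner_ket ket_def)
  also have "\<dots> = complex_of_real (1 / real n) * (cnj (H j t i) * G j' t i')"
    using sum_ket_weighted[OF t] .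
  finally have "cmod (cinner2 n (qls_meb n Q H i j) (qls_meb n P G i' j')) = 1 / real n"
    using hadamard_norm_entry[of n "H j" t i] hadamard_norm_entry[of n "G j'" t i'] assms(5,6) ij t
    by (simp add: norm_mult norm_divide)
  then show "(cmod (cinner2 n (qls_meb n Q H i j) (qls_meb n P G i' j')))\<^sup>2 = 1 / (real n)\<^sup>2"
    by (simp add: power_divide)
qed

end
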